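(* There is an absolute constant $C$ such that the following holds. Let $D$ be a distribution on $[0,\infty)$ with continuous cdf, let $0\le a<b\le1$, $N\ge1$, $\delta\in(0,1)$, and let $x_1,\dots,x_N$ be i.i.d. targeted samples of $D$ from the quantile interval $[a,b]$. Define, for $v\ge0$ with $q^D(v)\in[a,b]$, the estimate $q^E(v)=a+(b-a)\cdot\frac1N\,|\{t:x_t\ge v\}|$. Then with probability at least $1-\delta$, simultaneously for all $v$ with $q^D(v)\in[a,b]$, $$|q^E(v)-q^D(v)|\le\sqrt{\frac{2\,(q^D(v)-a)(b-q^D(v))\,L}{N}}+\frac{L\,(b-a)}{N},\qquad L=C\ln(N/\delta)+C.$$
   Context: Quantile $q^D(v)=\Pr_{x\sim D}[x\ge v]$; value at quantile $v^D(q)=\sup\{v\ge0:q^D(v)\ge q\}$. A targeted sample of $D$ from $[a,b]$ is $v^D(u)$ with $u$ uniform on $[a,b]$; equivalently, a draw from $D$ conditioned on its quantile lying in $[a,b]$. *)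

theory Defs
  imports "HOL-Probability.Probability"
begin

definition quantile :: "real measure \<Rightarrow> real \<Rightarrow> real" where
  "quantile D v = measure D {x. v \<le> x}"

definition value_at_quantile :: "real measure \<Rightarrow> real \<Rightarrow> real" where
  "value_at_quantile D q = Sup {v. 0 \<le> v \<and> q \<le> quantile D v}"

text \<open>Law of the underlying uniform variables of N i.i.d. targeted samples from [a,b].\<close>
definition targeted_uniforms :: "nat \<Rightarrow> real \<Rightarrow> real \<Rightarrow> (nat \<Rightarrow> real) measure" where
  "targeted_uniforms N a b = PiM {..<N} (\<lambda>_. uniform_measure lborel {a..b})"

definition targeted_samples :: "real measure \<Rightarrow> (nat \<Rightarrow> real) \<Rightarrow> nat \<Rightarrow> real" where
  "targeted_samples D u t = value_at_quantile D (u t)"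

definition est_quantile :: "real \<Rightarrow> real \<Rightarrow> nat \<Rightarrow> (nat \<Rightarrow> real) \<Rightarrow> real \<Rightarrow> real" where
  "est_quantile a b N x v = a + (b - a) * (real (card {t \<in> {..<N}. v \<le> x t}) / real N)"

end

theory Submission
  imports Defs
begin

text \<open>
  For \<open>0 < u \<le> 1\<close> and \<open>v \<ge> 0\<close> we have \<open>v\<^sup>D(u) \<ge> v\<close> iff \<open>u \<le> q\<^sup>D(v)\<close>, so the number of samples
  \<open>x\<^sub>t \<ge> v\<close> is the number of uniforms \<open>u\<^sub>t\<close> falling into an interval whose probability is
  \<open>w = (q\<^sup>D(v) - a) / (b - a)\<close>.
  For a single interval of probability \<open>p\<close>, the moment generating function of the centred
  count is at most \<open>exp (l\<^sup>2 N min p (1 - p))\<close> for \<open>|l| \<le> 1\<close>, which yields a Bernstein-type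
  tail bound.  A union bound makes it hold simultaneously for the \<open>N + 1\<close> grid intervals with
  endpoints \<open>a + (b - a) j / N\<close>, and every \<open>v\<close> is handled by sandwiching its interval between
  two neighbouring grid intervals, which costs only an additive \<open>O(L)\<close>.
\<close>

lemma exp_le_one_plus_sq:
  fixes x :: real
  assumes "\<bar>x\<bar> \<le> 1"
  shows "exp x \<le> 1 + x + x\<^sup>2"
proof (cases "0 \<le> x")
  case True
  then show ?thesis using exp_bound[of x] assms by auto
next
  case False
  define y where "y = - x"
  have y: "0 < y" "y \<le> 1" using False assms by (auto simp: y_def)
  have "exp x = 1 / exp y" by (simp add: y_def exp_minus field_simps)
  also have "\<dots> \<le> 1 / (1 + y)"
    using y by (intro divide_left_mono) (auto simp: add_pos_pos)
  also have "\<dots> \<le> 1 - y + y\<^sup>2"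
  proof -
    have "1 \<le> (1 - y + y\<^sup>2) * (1 + y)"
      using y by (simp add: algebra_simps power2_eq_square power3_eq_cube)
    then show ?thesis using y by (simp add: field_simps)
  qed
  finally show ?thesis by (simp add: y_def)
qed

lemma bernoulli_mgf_le:
  fixes p l :: real
  assumes p: "0 \<le> p" "p \<le> 1" and l: "\<bar>l\<bar> \<le> 1"
  shows "p * exp (l * (1 - p)) + (1 - p) * exp (- l * p) \<le> exp (l\<^sup>2 * p)"
proof -
  have "p * exp (l * (1 - p)) + (1 - p) * exp (- l * p) = exp (- l * p) * (1 + p * (exp l - 1))"
    by (simp add: algebra_simps flip: exp_add)
  also have "\<dots> \<le> exp (- l * p) * exp (p * (exp l - 1))"
    by (intro mult_left_mono) (use exp_ge_add_one_self in auto)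
  also have "\<dots> = exp (p * (exp l - 1 - l))"
    by (simp add: algebra_simps flip: exp_add)
  also have "\<dots> \<le> exp (l\<^sup>2 * p)"
    using mult_left_mono[OF exp_le_one_plus_sq[OF l], of p] p by (simp add: algebra_simps)
  finally show ?thesis .
qed

lemma bernoulli_mgf_le_min:
  fixes p l :: real
  assumes p: "0 \<le> p" "p \<le> 1" and l: "\<bar>l\<bar> \<le> 1"
  shows "p * exp (l * (1 - p)) + (1 - p) * exp (- l * p) \<le> exp (l\<^sup>2 * min p (1 - p))"
proof (cases "p \<le> 1 - p")
  case True
  then show ?thesis using bernoulli_mgf_le[OF p l] by simp
next
  case False
  have "(1 - p) * exp ((- l) * (1 - (1 - p))) + (1 - (1 - p)) * exp (- (- l) * (1 - p))
      \<le> exp ((- l)\<^sup>2 * (1 - p))"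
    by (rule bernoulli_mgf_le) (use p l in auto)
  then show ?thesis using False by (simp add: algebra_simps)
qed

definition chernoff_radius :: "real \<Rightarrow> real \<Rightarrow> real" where
  "chernoff_radius m L = 2 * sqrt (m * L) + 2 * L"

lemma chernoff_parameter_exists:
  fixes m L :: real
  assumes L: "0 < L" and m: "0 \<le> m"
  obtains s where "0 < s" "s \<le> 1" "s\<^sup>2 * m - s * chernoff_radius m L \<le> - L"
proof (cases "L \<le> m")
  case True
  define s where "s = sqrt (L / m)"
  have mpos: "0 < m" using L True by linarith
  have "s * sqrt (m * L) = L" "s\<^sup>2 * m = L" "0 \<le> s * L"
    using L mpos by (simp_all add: s_def real_sqrt_mult[symmetric])
  moreover have "0 < s" "s \<le> 1" using L True by (auto simp: s_def)
  ultimately show ?thesis by (intro that[of s]) (auto simp: chernoff_radius_def algebra_simps)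
next
  case False
  have "0 \<le> sqrt (m * L)" using m L by simp
  then have "m - 2 * sqrt (m * L) \<le> L" using False by linarith
  then show ?thesis by (intro that[of 1]) (auto simp: chernoff_radius_def)
qed

lemma (in prob_space) tail_le_of_mgf_le:
  fixes f :: "'a \<Rightarrow> real" and m L :: real
  assumes int: "\<And>s. integrable M (\<lambda>x. exp (s * f x))"
    and mgf: "\<And>s. 0 < s \<Longrightarrow> s \<le> 1 \<Longrightarrow> (\<integral>x. exp (s * f x) \<partial>M) \<le> exp (s\<^sup>2 * m)"
    and L: "0 < L" and m: "0 \<le> m"
  shows "prob {x \<in> space M. chernoff_radius m L \<le> f x} \<le> exp (- L)"
proof -
  obtain s where s: "0 < s" "s \<le> 1" "s\<^sup>2 * m - s * chernoff_radius m L \<le> - L"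
    using chernoff_parameter_exists[OF L m] .
  have "prob {x \<in> space M. chernoff_radius m L \<le> f x}
      \<le> exp (- s * chernoff_radius m L) * (\<integral>x\<in>space M. exp (s * f x) \<partial>M)"
    by (rule Chernoff_ineq_ge[OF s(1)])
      (auto simp: set_integrable_def intro!: Bochner_Integration.integrable_cong[THEN iffD2, OF refl _ int])
  also have "\<dots> = exp (- s * chernoff_radius m L) * (\<integral>x. exp (s * f x) \<partial>M)"
    by (simp add: set_integral_space[OF int])
  also have "\<dots> \<le> exp (- s * chernoff_radius m L) * exp (s\<^sup>2 * m)"
    by (intro mult_left_mono mgf s) auto
  also have "\<dots> \<le> exp (- L)"
    using s(3) by (simp flip: exp_add)
  finally show ?thesis .
qed

lemma exp_centered_indicator_eq:
  fixes l p :: real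
  shows "exp (l * (indicator A x - p)) = exp (- l * p) + (exp (l * (1 - p)) - exp (- l * p)) * indicator A x"
  by (auto simp: indicator_def algebra_simps)

lemma (in prob_space) integrable_exp_centered_indicator:
  fixes l p :: real
  assumes "A \<in> events"
  shows "integrable M (\<lambda>x. exp (l * (indicator A x - p)))"
  unfolding exp_centered_indicator_eq
  using assms
  by (intro Bochner_Integration.integrable_add integrable_mult_right integrable_real_indicator)
    (auto simp: less_top[symmetric])

lemma (in prob_space) integral_exp_centered_indicator_le:
  assumes A: "A \<in> events" and l: "\<bar>l\<bar> \<le> 1"
  shows "(\<integral>x. exp (l * (indicator A x - prob A)) \<partial>M) \<le> exp (l\<^sup>2 * min (prob A) (1 - prob A))"
proof -
  have "integrable M (indicat_real A)"
    using A by (intro integrable_real_indicator) (auto simp: less_top[symmetric])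
  then have "(\<integral>x. exp (l * (indicator A x - prob A)) \<partial>M)
      = prob A * exp (l * (1 - prob A)) + (1 - prob A) * exp (- l * prob A)"
    using A prob_space by (subst exp_centered_indicator_eq) (simp add: algebra_simps)
  also have "\<dots> \<le> exp (l\<^sup>2 * min (prob A) (1 - prob A))"
    by (rule bernoulli_mgf_le_min) (auto simp: l)
  finally show ?thesis .
qed

definition hits :: "nat \<Rightarrow> 'a set \<Rightarrow> (nat \<Rightarrow> 'a) \<Rightarrow> nat" where
  "hits N A u = card {t \<in> {..<N}. u t \<in> A}"

lemma hits_eq_sum_indicator: "real (hits N A u) = (\<Sum>t<N. indicator A (u t))"
proof -
  have "{t \<in> {..<N}. u t \<in> A} = {..<N} \<inter> {t. u t \<in> A}" by auto
  then show ?thesis by (simp add: hits_def indicator_def)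
qed

lemma borel_measurable_hits [measurable]:
  assumes [measurable]: "A \<in> sets M"
  shows "(\<lambda>u. real (hits N A u)) \<in> borel_measurable (PiM {..<N} (\<lambda>_. M))"
  unfolding hits_eq_sum_indicator by measurable

lemma exp_hits_eq_prod:
  fixes l p :: real
  shows "exp (l * (real (hits N A u) - real N * p)) = (\<Prod>t<N. exp (l * (indicator A (u t) - p)))"
  by (simp add: hits_eq_sum_indicator sum_subtractf sum_distrib_left right_diff_distrib
      flip: exp_sum)

lemma (in prob_space) integrable_exp_hits:
  fixes l p :: real
  assumes "A \<in> events"
  shows "integrable (PiM {..<N} (\<lambda>_. M)) (\<lambda>u. exp (l * (real (hits N A u) - real N * p)))"
proof -
  interpret P: product_prob_space "\<lambda>_. M" by unfold_locales
  show ?thesis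
    unfolding exp_hits_eq_prod
    by (intro P.product_integrable_prod integrable_exp_centered_indicator assms) auto
qed

lemma (in prob_space) hits_mgf_le:
  fixes l :: real
  assumes A: "A \<in> events" and l: "\<bar>l\<bar> \<le> 1"
  shows "(\<integral>u. exp (l * (hits N A u - N * prob A)) \<partial>PiM {..<N} (\<lambda>_. M))
      \<le> exp (l\<^sup>2 * (N * min (prob A) (1 - prob A)))"
proof -
  interpret P: product_prob_space "\<lambda>_. M" by unfold_locales
  have "(\<integral>u. exp (l * (hits N A u - N * prob A)) \<partial>PiM {..<N} (\<lambda>_. M))
      = (\<Prod>t<N. \<integral>x. exp (l * (indicator A x - prob A)) \<partial>M)"
    unfolding exp_hits_eq_prod
    by (intro P.product_integral_prod integrable_exp_centered_indicator A) auto
  also have "\<dots> \<le> (\<Prod>t<N. exp (l\<^sup>2 * min (prob A) (1 - prob A)))"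
    by (intro prod_mono conjI integral_nonneg_AE AE_I2 integral_exp_centered_indicator_le A l) auto
  also have "\<dots> = exp (l\<^sup>2 * (N * min (prob A) (1 - prob A)))"
    by (simp add: exp_of_nat_mult[symmetric] algebra_simps)
  finally show ?thesis .
qed

lemma (in prob_space) hits_deviation_prob_le:
  fixes N :: nat and L :: real
  assumes A: "A \<in> events" and L: "0 < L"
  defines "P \<equiv> PiM {..<N} (\<lambda>_. M)"
  shows "measure P {u \<in> space P. chernoff_radius (N * min (prob A) (1 - prob A)) L
      \<le> \<bar>hits N A u - N * prob A\<bar>} \<le> 2 * exp (- L)"
proof -
  interpret P: prob_space P unfolding P_def by (intro prob_space_PiM prob_space_axioms)
  define m where "m = N * min (prob A) (1 - prob A)"
  define f where "f u = real (hits N A u) - N * prob A" for u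
  have m: "0 \<le> m" by (simp add: m_def)
  have [measurable]: "f \<in> borel_measurable P"
    unfolding f_def P_def using A by measurable
  have up: "P.prob {u \<in> space P. chernoff_radius m L \<le> f u} \<le> exp (- L)"
  proof (rule P.tail_le_of_mgf_le[OF _ _ L m])
    show "integrable P (\<lambda>u. exp (s * f u))" for s
      unfolding f_def P_def by (rule integrable_exp_hits[OF A])
    show "(\<integral>u. exp (s * f u) \<partial>P) \<le> exp (s\<^sup>2 * m)" if "0 < s" "s \<le> 1" for s
      unfolding f_def P_def m_def using that by (intro hits_mgf_le[OF A]) auto
  qed
  have down: "P.prob {u \<in> space P. chernoff_radius m L \<le> - f u} \<le> exp (- L)"
  proof (rule P.tail_le_of_mgf_le[OF _ _ L m])
    show "integrable P (\<lambda>u. exp (s * - f u))" for s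
      unfolding f_def P_def minus_mult_commute[symmetric] by (rule integrable_exp_hits[OF A])
    show "(\<integral>u. exp (s * - f u) \<partial>P) \<le> exp (s\<^sup>2 * m)" if "0 < s" "s \<le> 1" for s
      using hits_mgf_le[OF A, of "- s" N] that
      unfolding f_def P_def m_def by (simp add: algebra_simps)
  qed
  have "{u \<in> space P. chernoff_radius m L \<le> \<bar>f u\<bar>}
      = {u \<in> space P. chernoff_radius m L \<le> f u} \<union> {u \<in> space P. chernoff_radius m L \<le> - f u}"
    by auto
  then have "P.prob {u \<in> space P. chernoff_radius m L \<le> \<bar>f u\<bar>}
      \<le> P.prob {u \<in> space P. chernoff_radius m L \<le> f u} + P.prob {u \<in> space P. chernoff_radius m L \<le> - f u}"
    by (simp add: measure_Un_le)
  then show ?thesis using up down by (simp add: m_def f_def)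
qed

lemma (in prob_space) hits_uniform_concentration:
  fixes N :: nat and L :: real and \<A> :: "'a set set"
  assumes fin: "finite \<A>" and ev: "\<A> \<subseteq> events" and L: "0 < L"
  defines "P \<equiv> PiM {..<N} (\<lambda>_. M)"
  obtains S where "S \<in> sets P" "1 - 2 * card \<A> * exp (- L) \<le> measure P S"
    "\<And>u A. u \<in> S \<Longrightarrow> A \<in> \<A> \<Longrightarrow>
       \<bar>hits N A u - N * prob A\<bar> < chernoff_radius (N * min (prob A) (1 - prob A)) L"
proof -
  interpret P: prob_space P unfolding P_def by (intro prob_space_PiM prob_space_axioms)
  define bad where "bad A = {u \<in> space P. chernoff_radius (N * min (prob A) (1 - prob A)) L
      \<le> \<bar>hits N A u - N * prob A\<bar>}" for A
  have bad_sets: "bad A \<in> sets P" if "A \<in> \<A>" for A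
  proof -
    have [measurable]: "A \<in> events" using that ev by auto
    show ?thesis unfolding bad_def P_def by measurable
  qed
  have "P.prob (\<Union>A\<in>\<A>. bad A) \<le> (\<Sum>A\<in>\<A>. P.prob (bad A))"
    by (rule measure_UNION_le[OF fin bad_sets])
  also have "\<dots> \<le> (\<Sum>A\<in>\<A>. 2 * exp (- L))"
    unfolding bad_def P_def using ev by (intro sum_mono hits_deviation_prob_le L) auto
  finally have "P.prob (\<Union>A\<in>\<A>. bad A) \<le> 2 * card \<A> * exp (- L)"
    by simp
  moreover have "(\<Union>A\<in>\<A>. bad A) \<in> sets P"
    using fin bad_sets by auto
  ultimately show ?thesis
    by (intro that[of "space P - (\<Union>A\<in>\<A>. bad A)"])
      (auto simp: P.prob_compl bad_def not_le)
qed

lemma quantile_antimono: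
  assumes "prob_space D" "sets D = sets borel" and "x \<le> y"
  shows "quantile D y \<le> quantile D x"
proof -
  interpret prob_space D by fact
  show ?thesis
    unfolding quantile_def using assms by (intro finite_measure_mono) auto
qed

lemma quantile_incseq_tendsto:
  assumes "prob_space D" "sets D = sets borel" and "incseq c"
  shows "(\<lambda>n. quantile D (c n)) \<longlonglongrightarrow> measure D (\<Inter>n. {x. c n \<le> x})"
proof -
  interpret prob_space D by fact
  show ?thesis
    unfolding quantile_def using assms
    by (intro finite_Lim_measure_decseq) (auto simp: decseq_def incseq_def intro: order.trans)
qed

lemma quantile_tendsto_0:
  assumes "prob_space D" "sets D = sets borel"
  shows "(\<lambda>n. quantile D (real n)) \<longlonglongrightarrow> 0"
proof -
  have "(\<Inter>n. {x::real. real n \<le> x}) = {}"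
    using reals_Archimedean2 by (auto simp: not_le[symmetric])
  then show ?thesis
    using quantile_incseq_tendsto[OF assms, of real] by (simp add: incseq_def)
qed

lemma quantile_left_tendsto:
  assumes "prob_space D" "sets D = sets borel"
  shows "(\<lambda>k. quantile D (s - 1 / Suc k)) \<longlonglongrightarrow> quantile D s"
proof -
  have "(\<Inter>k. {x. s - 1 / Suc k \<le> x}) = {x. s \<le> x}"
  proof (intro equalityI subsetI)
    fix x assume "x \<in> (\<Inter>k. {x. s - 1 / Suc k \<le> x})"
    then have "s - x \<le> 1 / Suc k" for k by (auto dest: spec[of _ k])
    then show "x \<in> {x. s \<le> x}"
      using nat_approx_posE[of "s - x"] by (force simp: not_le[symmetric])
  qed (auto simp: diff_le_eq intro: add_increasing2)
  moreover have "incseq (\<lambda>k. s - 1 / Suc k)"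
    by (intro incseq_SucI) (simp add: frac_le)
  ultimately show ?thesis
    using quantile_incseq_tendsto[OF assms, of "\<lambda>k. s - 1 / Suc k"] by (simp add: quantile_def)
qed

lemma value_at_quantile_ge_iff:
  assumes D: "prob_space D" "sets D = sets borel" "quantile D 0 = 1"
    and u: "0 < u" "u \<le> 1" and v: "0 \<le> v"
  shows "v \<le> value_at_quantile D u \<longleftrightarrow> u \<le> quantile D v"
proof -
  define T where "T = {w. 0 \<le> w \<and> u \<le> quantile D w}"
  have T_ne: "T \<noteq> {}"
    using D(3) u by (auto simp: T_def)
  from order_tendstoD(2)[OF quantile_tendsto_0[OF D(1,2)] u(1)] obtain n where n: "quantile D (real n) < u"
    by (auto simp: eventually_sequentially)
  have "T \<subseteq> {..real n}"
  proof (rule subsetI, rule ccontr)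
    fix w assume "w \<in> T" "w \<notin> {..real n}"
    then show False
      using quantile_antimono[OF D(1,2), of "real n" w] n by (auto simp: T_def)
  qed
  then have T_bdd: "bdd_above T"
    by (auto simp: bdd_above_def)
  define s where "s = Sup T"
  have "u \<le> quantile D (s - 1 / Suc k)" for k
  proof -
    obtain w where "w \<in> T" "s - 1 / Suc k < w"
      using less_cSup_iff[OF T_ne T_bdd, of "s - 1 / Suc k"] by (auto simp: s_def)
    then show ?thesis
      using quantile_antimono[OF D(1,2), of "s - 1 / Suc k" w] by (auto simp: T_def)
  qed
  moreover note quantile_left_tendsto[OF D(1,2), of s]
  \<comment> \<open>left continuity of the quantile function: the supremum \<open>s\<close> lies in \<open>T\<close>\<close>
  ultimately have s: "u \<le> quantile D s"
    by (intro LIMSEQ_le_const) auto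
  show ?thesis
  proof
    assume "u \<le> quantile D v"
    then show "v \<le> value_at_quantile D u"
      using v T_bdd by (auto simp: value_at_quantile_def T_def intro: cSup_upper)
  next
    assume "v \<le> value_at_quantile D u"
    then show "u \<le> quantile D v"
      using s quantile_antimono[OF D(1,2), of v s] by (simp add: value_at_quantile_def s_def T_def)
  qed
qed

lemma quantile_le_1:
  assumes "prob_space D"
  shows "quantile D v \<le> 1"
  using prob_space.prob_le_1[OF assms] by (simp add: quantile_def)

lemma targeted_sample_ge_iff:
  assumes D: "prob_space D" "sets D = sets borel" "quantile D 0 = 1"
    and "0 < u t" "u t \<le> 1" "0 \<le> v"
  shows "v \<le> targeted_samples D u t \<longleftrightarrow> u t \<le> quantile D v"
  unfolding targeted_samples_def using assms by (rule value_at_quantile_ge_iff)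

lemma hits_le_card_samples_ge:
  assumes D: "prob_space D" "sets D = sets borel" "quantile D 0 = 1"
    and "0 \<le> a" "0 \<le> v" "c \<le> quantile D v"
  shows "hits N {a<..c} u \<le> card {t \<in> {..<N}. v \<le> targeted_samples D u t}"
  unfolding hits_def using assms quantile_le_1[OF D(1), of v]
  by (intro card_mono) (auto simp: targeted_sample_ge_iff)

text \<open>The complement of \<open>{c<..1}\<close> also catches the uniforms outside \<open>(0, 1]\<close> (a null set),
  on which \<open>value_at_quantile\<close> is junk.\<close>

lemma card_samples_ge_le_hits:
  assumes D: "prob_space D" "sets D = sets borel" "quantile D 0 = 1"
    and "0 \<le> v" "quantile D v \<le> c"
  shows "card {t \<in> {..<N}. v \<le> targeted_samples D u t} \<le> hits N (- {c<..1}) u"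
proof -
  have "0 \<le> quantile D v" by (simp add: quantile_def)
  then show ?thesis
    unfolding hits_def using assms by (intro card_mono) (auto simp: targeted_sample_ge_iff)
qed

lemma min_le_twice_product:
  fixes p :: real
  assumes "0 \<le> p" "p \<le> 1"
  shows "min p (1 - p) \<le> 2 * (p * (1 - p))"
proof (cases "p \<le> 1 / 2")
  case True
  then have "p * (2 * p) \<le> p * 1" using assms by (intro mult_left_mono) auto
  then show ?thesis using True by (auto simp: min_def algebra_simps)
next
  case False
  then have "0 \<le> (1 - p) * (2 * p - 1)" using assms by auto
  then show ?thesis using False by (auto simp: min_def algebra_simps)
qed

lemma two_sqrt_two_mult_le:
  fixes x :: real
  assumes "0 \<le> x"
  shows "2 * sqrt (2 * x) \<le> x + 2"
proof -
  have "8 * x \<le> (x + 2)\<^sup>2"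
    using zero_le_power2[of "x - 2"] by (simp add: power2_eq_square algebra_simps)
  then have "sqrt (2\<^sup>2 * (2 * x)) \<le> x + 2"
    using assms by (simp add: real_le_lsqrt)
  then show ?thesis
    by (simp only: real_sqrt_mult real_sqrt_abs)
qed

lemma chernoff_radius_near_le:
  fixes w j L' L :: real and N :: nat
  assumes w: "0 \<le> w" "w \<le> 1" and N: "1 \<le> N"
    and j: "0 \<le> j" "j \<le> real N" "\<bar>j - real N * w\<bar> \<le> 1"
    and L': "0 < L'" "4 * L' \<le> L" "3 * L' + 3 \<le> L"
  shows "1 + chernoff_radius (real N * min (j / real N) (1 - j / real N)) L'
      \<le> sqrt (2 * real N * w * (1 - w) * L) + L"
proof -
  define p where "p = j / real N"
  define V where "V = 2 * real N * w * (1 - w)"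
  have p: "0 \<le> p" "p \<le> 1" "\<bar>p - w\<bar> \<le> 1 / real N"
    using j N by (auto simp: p_def field_simps abs_le_iff)
  have V: "0 \<le> V" using w by (simp add: V_def)
  have "\<bar>p * (1 - p) - w * (1 - w)\<bar> = \<bar>p - w\<bar> * \<bar>1 - p - w\<bar>"
    by (simp add: abs_mult[symmetric] algebra_simps)
  also have "\<dots> \<le> 1 / real N * 1"
    using p w by (intro mult_mono) auto
  finally have "real N * (p * (1 - p)) \<le> real N * (w * (1 - w)) + 1"
    using N by (simp add: abs_le_iff field_simps)
  then have "real N * min p (1 - p) \<le> V + 2"
    using mult_left_mono[OF min_le_twice_product[OF p(1,2)], of "real N"] by (simp add: V_def)
  then have "sqrt (real N * min p (1 - p) * L') \<le> sqrt ((V + 2) * L')"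
    using L' by (intro real_sqrt_le_mono mult_right_mono) auto
  also have "\<dots> \<le> sqrt (V * L') + sqrt (2 * L')"
    using sqrt_add_le_add_sqrt[of "V * L'" "2 * L'"] V L' by (simp add: algebra_simps)
  finally have "sqrt (real N * min p (1 - p) * L') \<le> sqrt (V * L') + sqrt (2 * L')" .
  moreover have "2 * sqrt (V * L') \<le> sqrt (V * L)"
    using L' V real_sqrt_le_mono[of "V * (4 * L')" "V * L"]
    by (simp add: mult_left_mono real_sqrt_mult)
  moreover have "2 * sqrt (2 * L') \<le> L' + 2"
    using L' by (intro two_sqrt_two_mult_le) auto
  ultimately show ?thesis
    using L' by (simp add: chernoff_radius_def p_def V_def)
qed

lemma rescaled_deviation_le:
  fixes a b w k L :: real and N :: nat
  assumes ab: "a < b" and N: "1 \<le> N" and w: "0 \<le> w" "w \<le> 1"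
    and k: "\<bar>k - real N * w\<bar> \<le> sqrt (2 * real N * w * (1 - w) * L) + L"
  defines "Q \<equiv> a + (b - a) * w"
  shows "\<bar>a + (b - a) * (k / real N) - Q\<bar>
      \<le> sqrt (2 * (Q - a) * (b - Q) * L / real N) + L * (b - a) / real N"
proof -
  define r where "r = (b - a) / real N"
  have r: "0 \<le> r" using ab by (simp add: r_def)
  have "2 * (Q - a) * (b - Q) * L / real N = r\<^sup>2 * (2 * real N * w * (1 - w) * L)"
    using N by (simp add: Q_def r_def field_simps power2_eq_square)
  then have "sqrt (2 * (Q - a) * (b - Q) * L / real N) = r * sqrt (2 * real N * w * (1 - w) * L)"
    using r by (simp add: real_sqrt_mult)
  moreover have "a + (b - a) * (k / real N) - Q = r * (k - real N * w)"
    using N by (simp add: Q_def r_def field_simps)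
  then have "\<bar>a + (b - a) * (k / real N) - Q\<bar> = r * \<bar>k - real N * w\<bar>"
    using r by (simp add: abs_mult)
  ultimately show ?thesis
    using mult_left_mono[OF k r] by (simp add: r_def algebra_simps)
qed

definition grid :: "real \<Rightarrow> real \<Rightarrow> nat \<Rightarrow> nat \<Rightarrow> real" where
  "grid a b N j = a + (b - a) * (real j / real N)"

lemma grid_bounds:
  assumes "a < b" "j \<le> N"
  shows "a \<le> grid a b N j" "grid a b N j \<le> b"
proof -
  have "real j / real N \<le> 1" "0 \<le> real j / real N"
    using assms(2) by (auto simp: divide_le_eq_1)
  then show "a \<le> grid a b N j" "grid a b N j \<le> b"
    using assms(1) mult_left_le[of "real j / real N" "b - a"] by (auto simp: grid_def)
qed

lemma measure_uniform_grid:
  assumes ab: "a < b" "b \<le> 1" and j: "j \<le> N" "1 \<le> N"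
  shows "measure (uniform_measure lborel {a..b}) {a<..grid a b N j} = real j / real N"
    and "measure (uniform_measure lborel {a..b}) (- {grid a b N j<..1}) = real j / real N"
proof -
  have g: "a \<le> grid a b N j" "grid a b N j \<le> b"
    using grid_bounds[OF ab(1) j(1)] .
  have frac: "(grid a b N j - a) / (b - a) = real j / real N"
    using ab by (simp add: grid_def)
  have "{a..b} \<inter> {a<..grid a b N j} = {a<..grid a b N j}"
       "{a..b} \<inter> - {grid a b N j<..1} = {a..grid a b N j}"
    using g ab by auto
  then show "measure (uniform_measure lborel {a..b}) {a<..grid a b N j} = real j / real N"
    and "measure (uniform_measure lborel {a..b}) (- {grid a b N j<..1}) = real j / real N"
    using ab g frac by (simp_all add: measure_uniform_measure)
qed

lemma nat_floor_ceiling_bounds: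
  fixes x :: real
  assumes "0 \<le> x" "x \<le> real N"
  obtains j0 j1 :: nat
  where "j0 \<le> N" "real j0 \<le> x" "x < real j0 + 1"
    and "j1 \<le> N" "x \<le> real j1" "real j1 < x + 1"
proof
  show "nat \<lfloor>x\<rfloor> \<le> N" "real (nat \<lfloor>x\<rfloor>) \<le> x" "x < real (nat \<lfloor>x\<rfloor>) + 1"
    using assms by linarith+
  show "nat \<lceil>x\<rceil> \<le> N" "x \<le> real (nat \<lceil>x\<rceil>)" "real (nat \<lceil>x\<rceil>) < x + 1"
    using assms by linarith+
qed

lemma est_quantile_error_le:
  fixes L L' :: real
  assumes D: "prob_space D" "sets D = sets borel" "quantile D 0 = 1"
    and ab: "0 \<le> a" "a < b" "b \<le> 1" and N: "1 \<le> N"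
    and L': "0 < L'" "4 * L' \<le> L" "3 * L' + 3 \<le> L"
    and conc: "\<And>j A. j \<le> N \<Longrightarrow> A \<in> {{a<..grid a b N j}, - {grid a b N j<..1}} \<Longrightarrow>
      \<bar>hits N A u - real j\<bar> < chernoff_radius (N * min (j / N) (1 - j / N)) L'"
    and v: "0 \<le> v" "a \<le> quantile D v" "quantile D v \<le> b"
  shows "\<bar>est_quantile a b N (targeted_samples D u) v - quantile D v\<bar>
      \<le> sqrt (2 * (quantile D v - a) * (b - quantile D v) * L / N) + L * (b - a) / N"
proof -
  define w where "w = (quantile D v - a) / (b - a)"
  define k where "k = card {t \<in> {..<N}. v \<le> targeted_samples D u t}"
  define R where "R = sqrt (2 * real N * w * (1 - w) * L) + L"
  have w: "0 \<le> w" "w \<le> 1" and Q: "quantile D v = a + (b - a) * w"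
    using v ab by (auto simp: w_def field_simps)
  have "0 \<le> real N * w" "real N * w \<le> real N"
    using w by (auto simp: mult_left_le)
  then obtain j0 j1 where j0: "j0 \<le> N" "real j0 \<le> real N * w" "real N * w < real j0 + 1"
    and j1: "j1 \<le> N" "real N * w \<le> real j1" "real j1 < real N * w + 1"
    by (rule nat_floor_ceiling_bounds)
  have "real j0 / N \<le> w" "w \<le> real j1 / N"
    using j0(2) j1(2) N by (auto simp: field_simps)
  then have grid_le: "grid a b N j0 \<le> quantile D v" and le_grid: "quantile D v \<le> grid a b N j1"
    using ab(2) by (auto simp: Q grid_def simp del: times_divide_eq_right intro!: mult_left_mono)
  have radius: "1 + chernoff_radius (N * min (j / N) (1 - j / N)) L' \<le> R"
    if "j \<le> N" "\<bar>real j - real N * w\<bar> \<le> 1" for j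
    unfolding R_def using that w N L' by (intro chernoff_radius_near_le) auto
  have "real N * w - R < k"
    using hits_le_card_samples_ge[OF D ab(1) v(1) grid_le, where N = N and u = u]
      conc[OF j0(1), of "{a<..grid a b N j0}"] radius[OF j0(1)] j0 by (simp add: k_def)
  moreover have "k < real N * w + R"
    using card_samples_ge_le_hits[OF D v(1) le_grid, where N = N and u = u]
      conc[OF j1(1), of "- {grid a b N j1<..1}"] radius[OF j1(1)] j1 by (simp add: k_def)
  ultimately have "\<bar>k - real N * w\<bar> \<le> R"
    by linarith
  then show ?thesis
    using rescaled_deviation_le[OF ab(2) N w, of k L]
    by (simp add: R_def est_quantile_def k_def Q)
qed

lemma ln_four_succ_div_le:
  fixes \<delta> :: real
  assumes N: "1 \<le> N" and \<delta>: "0 < \<delta>"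
  shows "ln (4 * (real N + 1) / \<delta>) \<le> ln (real N / \<delta>) + 3"
proof -
  have "(2::real) ^ 3 \<le> exp 1 ^ 3"
    using exp_ge_add_one_self[of 1] by (intro power_mono) auto
  then have "(8::real) \<le> exp 3"
    by (simp flip: exp_of_nat_mult)
  then have "ln 8 \<le> (3::real)"
    using ln_mono[of 8 "exp 3"] by simp
  moreover have "ln (4 * (real N + 1) / \<delta>) \<le> ln (8 * (real N / \<delta>))"
    using N \<delta> by (intro ln_mono) (auto simp: field_simps)
  moreover have "ln (8 * (real N / \<delta>)) = ln 8 + ln (real N / \<delta>)"
    using N \<delta> by (intro ln_mult_pos) auto
  ultimately show ?thesis by linarith
qed

lemma targeted_estimate_concentration:
  fixes \<delta> :: real
  assumes D: "prob_space D" "sets D = sets borel" "quantile D 0 = 1"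
    and ab: "0 \<le> a" "a < b" "b \<le> 1" and N: "1 \<le> N" and \<delta>: "0 < \<delta>" "\<delta> < 1"
  defines "L \<equiv> 12 * ln (real N / \<delta>) + 12"
  shows "\<exists>S \<in> sets (targeted_uniforms N a b).
    measure (targeted_uniforms N a b) S \<ge> 1 - \<delta> \<and>
    (\<forall>u \<in> S. \<forall>v. 0 \<le> v \<and> a \<le> quantile D v \<and> quantile D v \<le> b \<longrightarrow>
       \<bar>est_quantile a b N (targeted_samples D u) v - quantile D v\<bar>
         \<le> sqrt (2 * (quantile D v - a) * (b - quantile D v) * L / N) + L * (b - a) / N)"
proof -
  define U where "U = uniform_measure lborel {a..b}"
  interpret U: prob_space U
    unfolding U_def using ab by (intro prob_space_uniform_measure) auto
  \<comment> \<open>\<open>exp (- L') = \<delta> / (4 (N + 1))\<close> pays for two tails of each of the \<open>2 (N + 1)\<close> grid intervals.\<close>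
  define L' where "L' = ln (4 * (real N + 1) / \<delta>)"
  define \<A> where "\<A> = (\<lambda>j. {a<..grid a b N j}) ` {..N} \<union> (\<lambda>j. - {grid a b N j<..1}) ` {..N}"
  have "0 < ln (real N / \<delta>)"
    using N \<delta> by (simp add: field_simps)
  moreover have L'_pos: "0 < L'"
    using N \<delta> by (simp add: L'_def field_simps)
  moreover note ln_four_succ_div_le[OF N \<delta>(1)]
  ultimately have L': "4 * L' \<le> L" "3 * L' + 3 \<le> L"
    by (simp_all add: L_def L'_def)
  have "card \<A> \<le> card {..N} + card {..N}"
    unfolding \<A>_def by (rule order.trans[OF card_Un_le add_mono[OF card_image_le card_image_le]]) auto
  then have "2 * card \<A> / (4 * (real N + 1)) \<le> 1"
    by (simp add: field_simps)
  then have "\<delta> * (2 * card \<A> / (4 * (real N + 1))) \<le> \<delta>"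
    using \<delta> by (intro mult_left_le) auto
  moreover have "2 * card \<A> * exp (- L') = \<delta> * (2 * card \<A> / (4 * (real N + 1)))"
    using \<delta> by (simp add: L'_def exp_minus)
  ultimately have card_small: "2 * card \<A> * exp (- L') \<le> \<delta>"
    by linarith
  obtain S where S: "S \<in> sets (PiM {..<N} (\<lambda>_. U))"
    "1 - 2 * card \<A> * exp (- L') \<le> measure (PiM {..<N} (\<lambda>_. U)) S"
    "\<And>u A. u \<in> S \<Longrightarrow> A \<in> \<A> \<Longrightarrow> \<bar>hits N A u - N * U.prob A\<bar>
       < chernoff_radius (N * min (U.prob A) (1 - U.prob A)) L'"
    by (rule U.hits_uniform_concentration[of \<A>]) (auto simp: \<A>_def U_def L'_pos)
  have conc: "\<bar>hits N A u - real j\<bar> < chernoff_radius (N * min (j / N) (1 - j / N)) L'"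
    if "u \<in> S" "j \<le> N" "A \<in> {{a<..grid a b N j}, - {grid a b N j<..1}}" for u j A
  proof -
    have "A \<in> \<A>"
      using that(2,3) by (auto simp: \<A>_def)
    moreover have "U.prob A = j / N"
      using that(3) measure_uniform_grid[OF ab(2,3) that(2) N] by (auto simp: U_def)
    ultimately show ?thesis
      using S(3)[OF that(1), of A] N by simp
  qed
  show ?thesis
  proof (intro bexI conjI ballI allI impI)
    show "S \<in> sets (targeted_uniforms N a b)"
      using S(1) by (simp add: targeted_uniforms_def U_def)
    show "1 - \<delta> \<le> measure (targeted_uniforms N a b) S"
      using S(2) card_small by (simp add: targeted_uniforms_def U_def)
  qed (use est_quantile_error_le[OF D ab N L'_pos L' conc] in auto)
qed

theorem mainTheorem8:
  shows "\<exists>C::real. \<forall>(D::real measure) (a::real) (b::real) (N::nat) (\<delta>::real).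
     prob_space D \<and> sets D = sets borel \<and> measure D {0..} = 1 \<and>
     (\<forall>x. measure D {x} = 0) \<and>
     0 \<le> a \<and> a < b \<and> b \<le> 1 \<and> 1 \<le> N \<and> 0 < \<delta> \<and> \<delta> < 1 \<longrightarrow>
     (let L = C * ln (real N / \<delta>) + C in
      \<exists>S \<in> sets (targeted_uniforms N a b).
        measure (targeted_uniforms N a b) S \<ge> 1 - \<delta> \<and>
        (\<forall>u \<in> S. \<forall>v. 0 \<le> v \<and> a \<le> quantile D v \<and> quantile D v \<le> b \<longrightarrow>
           \<bar>est_quantile a b N (targeted_samples D u) v - quantile D v\<bar>
             \<le> sqrt (2 * (quantile D v - a) * (b - quantile D v) * L / real N)
                + L * (b - a) / real N))"
proof (intro exI[of _ 12] allI impI)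
  fix D :: "real measure" and a b :: real and N :: nat and \<delta> :: real
  assume "prob_space D \<and> sets D = sets borel \<and> measure D {0..} = 1 \<and> (\<forall>x. measure D {x} = 0) \<and>
    0 \<le> a \<and> a < b \<and> b \<le> 1 \<and> 1 \<le> N \<and> 0 < \<delta> \<and> \<delta> < 1"
  then have "prob_space D" "sets D = sets borel" "quantile D 0 = 1"
    and "0 \<le> a" "a < b" "b \<le> 1" "1 \<le> N" "0 < \<delta>" "\<delta> < 1"
    by (auto simp: quantile_def atLeast_def)
  then show "let L = 12 * ln (real N / \<delta>) + 12 in
      \<exists>S \<in> sets (targeted_uniforms N a b).
        measure (targeted_uniforms N a b) S \<ge> 1 - \<delta> \<and>
        (\<forall>u \<in> S. \<forall>v. 0 \<le> v \<and> a \<le> quantile D v \<and> quantile D v \<le> b \<longrightarrow>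
           \<bar>est_quantile a b N (targeted_samples D u) v - quantile D v\<bar>
             \<le> sqrt (2 * (quantile D v - a) * (b - quantile D v) * L / real N)
                + L * (b - a) / real N)"
    unfolding Let_def by (rule targeted_estimate_concentration)
qed

end
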